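(* Let $\lambda\in(0,1)$, put $k=1/\sqrt\lambda$, and assume $D(k)\neq0$, where $D(k)=-(1-k)^2e^{-(1+k)}-(1-k)^2e^{1+k}+(1+k)^2e^{k-1}+(1+k)^2e^{1-k}-8k$. Let $(y,z,p_y,p_z)$ be any solution on $[0,1]$ of the regularized Pontryagin system $$\lambda\dot y=p_y+p_z-\lambda y,\quad \lambda\dot z=p_y+p_z,\quad \dot p_y=p_y-z+2y,\quad \dot p_z=z-y,$$ with boundary conditions $y(0)=z(0)=0$, $y(1)=0$, $z(1)=1$. Then $x:=z-y$ coincides on $[0,1]$ with the unique function of the form $a e^{t}+b e^{-t}+c e^{t/\sqrt\lambda}+d e^{-t/\sqrt\lambda}$ satisfying $x(0)=0$, $x(1)=1$, $\dot x(0)=\dot x(1)=0$. That is, the regular optimal trajectory equals the exponential-ansatz shortcut-to-adiabaticity trajectory with $k=1/\sqrt\lambda$.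
   Context: The regularized Pontryagin system is the extremal system of the optimal control problem $\dot y=v-y$, $\dot z=v$, minimize $\int_0^1[(z-y)^2+y^2+\lambda v^2]dt$, with optimal control $v_R=(p_y+p_z)/\lambda$; here $y=\dot x$, $z=u$ for the dynamics $\dot x+x=u$. *)

theory Defs
  imports "HOL-Analysis.Analysis"
begin

definition Dk :: "real \<Rightarrow> real" where
  "Dk k = - ((1 - k)^2 * exp (-(1 + k))) - (1 - k)^2 * exp (1 + k)
          + (1 + k)^2 * exp (k - 1) + (1 + k)^2 * exp (1 - k) - 8 * k"

definition ansatz :: "real \<Rightarrow> real \<Rightarrow> real \<Rightarrow> real \<Rightarrow> real \<Rightarrow> real \<Rightarrow> real" where
  "ansatz k a b c d t = a * exp t + b * exp (- t) + c * exp (k * t) + d * exp (- (k * t))"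

definition ansatz_bc :: "real \<Rightarrow> real \<Rightarrow> real \<Rightarrow> real \<Rightarrow> real \<Rightarrow> bool" where
  "ansatz_bc k a b c d \<longleftrightarrow>
     ansatz k a b c d 0 = 0 \<and> ansatz k a b c d 1 = 1 \<and>
     deriv (ansatz k a b c d) 0 = 0 \<and> deriv (ansatz k a b c d) 1 = 0"

end

theory Submission
  imports Defs
begin

text \<open>With \<open>k = 1/\<surd>\<lambda>\<close>, the linear Pontryagin system has the eigenvalues \<open>1, -1, k, -k\<close>.
  Each left eigenvector gives a linear combination of \<open>y, z, p\<^sub>y, p\<^sub>z\<close> that is a pure
  exponential, and \<open>x = z - y\<close> is a combination of these four modes, hence of the form of the
  ansatz. Since \<open>x' = y\<close>, the boundary conditions of the trajectory are exactly those of the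
  ansatz, and \<open>D(k)\<close> is half the determinant of the linear system for the coefficients,
  so they are unique.\<close>

lemma has_real_derivative_scaled_imp_exp:
  fixes f :: "real \<Rightarrow> real"
  assumes "convex S" "t0 \<in> S"
    and deriv: "\<And>t. t \<in> S \<Longrightarrow> (f has_real_derivative r * f t) (at t within S)"
  shows "\<forall>t\<in>S. f t = f t0 * exp (r * (t - t0))"
proof -
  have "((\<lambda>t. f t * exp (- (r * t))) has_real_derivative 0) (at t within S)" if "t \<in> S" for t
  proof -
    have "((\<lambda>t. f t * exp (- (r * t))) has_real_derivative
            r * f t * exp (- (r * t)) + f t * (exp (- (r * t)) * - (r * 1))) (at t within S)"
      by (auto intro!: derivative_eq_intros deriv that)
    then show ?thesis by (simp add: algebra_simps)
  qed
  then obtain c where c: "\<forall>t\<in>S. f t * exp (- (r * t)) = c"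
    using has_field_derivative_zero_constant[OF \<open>convex S\<close>] by blast
  show ?thesis
  proof
    fix t assume "t \<in> S"
    then have "f t * exp (- (r * t)) = f t0 * exp (- (r * t0))"
      using c \<open>t0 \<in> S\<close> by simp
    then have "f t = f t0 * exp (- (r * t0)) * exp (r * t)"
      by (metis exp_minus_inverse mult.assoc mult.commute mult.right_neutral)
    then show "f t = f t0 * exp (r * (t - t0))"
      by (simp add: mult.assoc right_diff_distrib flip: exp_add)
  qed
qed

lemma deriv_eq_if_eq_on_closed_interval:
  fixes f g :: "real \<Rightarrow> real"
  assumes "a < b" "t \<in> {a..b}" "\<forall>s\<in>{a..b}. f s = g s"
    and f': "(f has_real_derivative f') (at t within {a..b})"
    and g': "(g has_real_derivative g') (at t)"
  shows "deriv g t = f'"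
proof -
  have "(g has_real_derivative f') (at t within {a..b})"
    using has_field_derivative_transform_within[OF f' zero_less_one] assms(2,3) by simp
  moreover have "(g has_real_derivative g') (at t within {a..b})"
    using g' by (rule has_field_derivative_at_within)
  ultimately have "f' = g'"
    using vector_derivative_unique_within_closed_interval[of a b t g] assms(1,2)
    by (auto simp: has_real_derivative_iff_has_vector_derivative)
  then show ?thesis using DERIV_imp_deriv[OF g'] by simp
qed

lemma ansatz_has_real_derivative:
  "(ansatz k a b c d has_real_derivative
     a * exp t - b * exp (- t) + c * k * exp (k * t) - d * k * exp (- (k * t))) (at t)"
  unfolding ansatz_def by (auto intro!: derivative_eq_intros simp: algebra_simps)

lemma ansatz_bc_iff:
  "ansatz_bc k a b c d \<longleftrightarrow>
     a + b + c + d = 0 \<and> a * exp 1 + b * exp (- 1) + c * exp k + d * exp (- k) = 1 \<and>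
     a - b + c * k - d * k = 0 \<and>
     a * exp 1 - b * exp (- 1) + c * k * exp k - d * k * exp (- k) = 0"
  using DERIV_imp_deriv[OF ansatz_has_real_derivative, of k a b c d]
  unfolding ansatz_bc_def by (simp add: ansatz_def)

lemma ansatz_bc_homogeneous_trivial:
  fixes k p q r s :: real
  assumes "Dk k \<noteq> 0"
    and e1: "p + q + r + s = 0"
    and e2: "p - q + k * r - k * s = 0"
    and e3: "p * exp 1 + q * exp (- 1) + r * exp k + s * exp (- k) = 0"
    and e4: "p * exp 1 - q * exp (- 1) + k * r * exp k - k * s * exp (- k) = 0"
  shows "p = 0 \<and> q = 0 \<and> r = 0 \<and> s = 0"
proof -
  define e ei E Ei where "e = exp (1::real)" and "ei = exp (- 1::real)"
    and "E = exp k" and "Ei = exp (- k)"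
  have inv: "e * ei = 1" "E * Ei = 1"
    unfolding e_def ei_def E_def Ei_def by (simp_all flip: exp_add)
  have Dk_eq: "Dk k = - ((1 - k)^2 * ei * Ei) - (1 - k)^2 * e * E + (1 + k)^2 * E * ei
                   + (1 + k)^2 * e * Ei - 8 * k"
    unfolding Dk_def e_def ei_def E_def Ei_def
    by (simp add: exp_add exp_diff exp_minus field_simps)
  \<comment> \<open>Eliminating \<open>p\<close> and \<open>q\<close> by \<open>e1, e2\<close> leaves a \<open>2 \<times> 2\<close> system for \<open>r, s\<close>.\<close>
  define M11 M12 M21 M22 where "M11 = (1 + k) * e + (1 - k) * ei - 2 * E"
    and "M12 = (1 - k) * e + (1 + k) * ei - 2 * Ei"
    and "M21 = (1 + k) * e - (1 - k) * ei - 2 * k * E"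
    and "M22 = (1 - k) * e - (1 + k) * ei + 2 * k * Ei"
  have row1: "r * M11 + s * M12 = 0"
    using e1 e2 e3 unfolding M11_def M12_def e_def ei_def E_def Ei_def by algebra
  have row2: "r * M21 + s * M22 = 0"
    using e1 e2 e4 unfolding M21_def M22_def e_def ei_def E_def Ei_def by algebra
  have det: "M11 * M22 - M12 * M21 = 2 * Dk k"
    unfolding Dk_eq M11_def M12_def M21_def M22_def using inv by algebra
  have "(M11 * M22 - M12 * M21) * r = M22 * (r * M11 + s * M12) - M12 * (r * M21 + s * M22)"
       "(M11 * M22 - M12 * M21) * s = M11 * (r * M21 + s * M22) - M21 * (r * M11 + s * M12)"
    by algebra+
  with row1 row2 det have "2 * Dk k * r = 0" "2 * Dk k * s = 0" by simp_all
  with \<open>Dk k \<noteq> 0\<close> have "r = 0" "s = 0" by simp_all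
  with e1 e2 show ?thesis by simp
qed

lemma ansatz_bc_unique:
  assumes "Dk k \<noteq> 0" "ansatz_bc k a b c d" "ansatz_bc k a' b' c' d'"
  shows "(a, b, c, d) = (a', b', c', d')"
  using ansatz_bc_homogeneous_trivial[OF \<open>Dk k \<noteq> 0\<close>, of "a - a'" "b - b'" "c - c'" "d - d'"]
    assms(2,3)
  unfolding ansatz_bc_iff by (simp add: algebra_simps)

lemma ex1_ansatz_bc:
  assumes "Dk k \<noteq> 0" "ansatz_bc k a b c d"
  shows "\<exists>!(a, b, c, d). ansatz_bc k a b c d"
proof (rule ex1I[of _ "(a, b, c, d)"])
  show "case (a, b, c, d) of (a, b, c, d) \<Rightarrow> ansatz_bc k a b c d" using assms(2) by simp
  fix p assume p: "case p of (a, b, c, d) \<Rightarrow> ansatz_bc k a b c d"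
  obtain a' b' c' d' where p_eq: "p = (a', b', c', d')" by (cases p)
  with p have "ansatz_bc k a' b' c' d'" by simp
  from ansatz_bc_unique[OF assms(1) this assms(2)] show "p = (a, b, c, d)" unfolding p_eq .
qed

lemma ansatz_bc_if_eq_on_unit_interval:
  assumes eq: "\<forall>t\<in>{0..1}. x t = ansatz k a b c d t"
    and x': "\<And>t. t \<in> {0..1} \<Longrightarrow> (x has_real_derivative x' t) (at t within {0..1})"
    and "x 0 = 0" "x 1 = 1" "x' 0 = 0" "x' 1 = 0"
  shows "ansatz_bc k a b c d"
proof -
  have "deriv (ansatz k a b c d) t = x' t" if "t \<in> {0..1}" for t
    using deriv_eq_if_eq_on_closed_interval[OF zero_less_one that eq x'[OF that]
        ansatz_has_real_derivative] .
  with eq assms(3-6) show ?thesis unfolding ansatz_bc_def by simp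
qed

locale regularized_pontryagin =
  fixes lam :: real and y z py pz y' z' py' pz' :: "real \<Rightarrow> real"
  assumes lam_pos: "0 < lam"
    and dy: "\<And>t. t \<in> {0..1} \<Longrightarrow> (y has_real_derivative y' t) (at t within {0..1})"
    and dz: "\<And>t. t \<in> {0..1} \<Longrightarrow> (z has_real_derivative z' t) (at t within {0..1})"
    and dpy: "\<And>t. t \<in> {0..1} \<Longrightarrow> (py has_real_derivative py' t) (at t within {0..1})"
    and dpz: "\<And>t. t \<in> {0..1} \<Longrightarrow> (pz has_real_derivative pz' t) (at t within {0..1})"
    and ode1: "\<And>t. t \<in> {0..1} \<Longrightarrow> lam * y' t = py t + pz t - lam * y t"
    and ode2: "\<And>t. t \<in> {0..1} \<Longrightarrow> lam * z' t = py t + pz t"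
    and ode3: "\<And>t. t \<in> {0..1} \<Longrightarrow> py' t = py t - z t + 2 * y t"
    and ode4: "\<And>t. t \<in> {0..1} \<Longrightarrow> pz' t = z t - y t"
begin

lemma difference_has_real_derivative:
  assumes "t \<in> {0..1}"
  shows "((\<lambda>t. z t - y t) has_real_derivative y t) (at t within {0..1})"
proof -
  have "lam * (z' t - y' t) = lam * y t"
    using ode1[OF assms] ode2[OF assms] by (simp add: algebra_simps)
  then have "z' t - y' t = y t" using lam_pos by simp
  then show ?thesis
    using DERIV_diff[OF dz[OF assms] dy[OF assms]] by simp
qed

definition comb :: "real \<Rightarrow> real \<Rightarrow> real \<Rightarrow> real \<Rightarrow> real \<Rightarrow> real" where
  "comb \<alpha> \<beta> \<gamma> \<delta> t = \<alpha> * y t + \<beta> * z t + \<gamma> * py t + \<delta> * pz t"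

text \<open>The four conditions say that \<open>(\<alpha>, \<beta>, \<gamma>, \<delta>)\<close> is a left eigenvector of the
  system matrix for the eigenvalue \<open>r\<close>.\<close>

lemma comb_eq_exp:
  assumes "2 * \<gamma> - \<delta> - \<alpha> = r * \<alpha>" "\<delta> - \<gamma> = r * \<beta>"
    "\<alpha> + \<beta> + lam * \<gamma> = lam * r * \<gamma>" "\<alpha> + \<beta> = lam * r * \<delta>"
  shows "\<forall>t\<in>{0..1}. comb \<alpha> \<beta> \<gamma> \<delta> t = comb \<alpha> \<beta> \<gamma> \<delta> 0 * exp (r * t)"
proof -
  have "(comb \<alpha> \<beta> \<gamma> \<delta> has_real_derivative r * comb \<alpha> \<beta> \<gamma> \<delta> t) (at t within {0..1})"
    if t: "t \<in> {0..1}" for t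
  proof -
    have deriv: "(comb \<alpha> \<beta> \<gamma> \<delta> has_real_derivative \<alpha> * y' t + \<beta> * z' t + \<gamma> * py' t + \<delta> * pz' t)
            (at t within {0..1})"
      unfolding comb_def[abs_def] by (auto intro!: derivative_eq_intros dy dz dpy dpz t)
    have "lam * (\<alpha> * y' t + \<beta> * z' t + \<gamma> * py' t + \<delta> * pz' t)
        = \<alpha> * (lam * y' t) + \<beta> * (lam * z' t) + lam * \<gamma> * py' t + lam * \<delta> * pz' t"
      by (simp add: algebra_simps)
    also have "\<dots> = lam * (2 * \<gamma> - \<delta> - \<alpha>) * y t + lam * (\<delta> - \<gamma>) * z t
        + (\<alpha> + \<beta> + lam * \<gamma>) * py t + (\<alpha> + \<beta>) * pz t"
      unfolding ode1[OF t] ode2[OF t] ode3[OF t] ode4[OF t] by (simp add: algebra_simps)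
    also have "\<dots> = lam * (r * comb \<alpha> \<beta> \<gamma> \<delta> t)"
      \<comment> \<open>\<open>assms(3)\<close> must be unfolded first: its left side contains that of \<open>assms(4)\<close>.\<close>
      unfolding assms(3) unfolding assms(1,2,4) comb_def by (simp add: algebra_simps)
    finally have "\<alpha> * y' t + \<beta> * z' t + \<gamma> * py' t + \<delta> * pz' t = r * comb \<alpha> \<beta> \<gamma> \<delta> t"
      using lam_pos by simp
    with deriv show ?thesis by (rule DERIV_cong)
  qed
  then have "\<forall>t\<in>{0..1}. comb \<alpha> \<beta> \<gamma> \<delta> t = comb \<alpha> \<beta> \<gamma> \<delta> 0 * exp (r * (t - 0))"
    by (intro has_real_derivative_scaled_imp_exp) simp_all
  then show ?thesis unfolding diff_zero .
qed

lemma difference_eq_ansatz: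
  assumes "lam < 1"
  obtains a b c d where "\<forall>t\<in>{0..1}. z t - y t = ansatz (1 / sqrt lam) a b c d t"
proof -
  define k where "k = 1 / sqrt lam"
  have "1 < k" unfolding k_def using lam_pos assms by simp
  moreover have "1 < k^2" by (rule one_less_power[OF \<open>1 < k\<close>]) simp
  ultimately have "k \<noteq> 0" "k^2 \<noteq> 1" by linarith+
  have lam_k: "lam = 1 / k^2" unfolding k_def using lam_pos by (simp add: power_divide)
  define m1 m2 m3 m4 where "m1 = comb 1 (- 1) 1 0"
    and "m2 = comb (k^2 - 2) (- (k^2)) (k^2) (2 * k^2)"
    and "m3 = comb k (- 1) (k^2) (k^2 - k)"
    and "m4 = comb k 1 (- (k^2)) (- (k^2 + k))"
  have mode1: "\<forall>t\<in>{0..1}. m1 t = m1 0 * exp (1 * t)"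
    unfolding m1_def by (rule comb_eq_exp) simp_all
  have mode2: "\<forall>t\<in>{0..1}. m2 t = m2 0 * exp ((- 1) * t)"
    unfolding m2_def by (rule comb_eq_exp) (use \<open>k \<noteq> 0\<close> in \<open>simp_all add: lam_k\<close>)
  have mode3: "\<forall>t\<in>{0..1}. m3 t = m3 0 * exp (k * t)"
    unfolding m3_def
    by (rule comb_eq_exp) (use \<open>k \<noteq> 0\<close> in \<open>simp_all add: lam_k power2_eq_square field_simps\<close>)
  have mode4: "\<forall>t\<in>{0..1}. m4 t = m4 0 * exp ((- k) * t)"
    unfolding m4_def
    by (rule comb_eq_exp) (use \<open>k \<noteq> 0\<close> in \<open>simp_all add: lam_k power2_eq_square field_simps\<close>)
  have "2 * (k^2 - 1) * (z t - y t) = m3 t - m4 t - k^2 * m1 t - m2 t" for t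
    unfolding m1_def m2_def m3_def m4_def comb_def by (simp add: algebra_simps)
  then have diff: "z t - y t = (m3 t - m4 t - k^2 * m1 t - m2 t) / (2 * (k^2 - 1))" for t
    using \<open>k^2 \<noteq> 1\<close> by (simp add: eq_divide_eq mult.commute)
  define a b c d where "a = - (k^2 * m1 0) / (2 * (k^2 - 1))" and "b = - m2 0 / (2 * (k^2 - 1))"
    and "c = m3 0 / (2 * (k^2 - 1))" and "d = - m4 0 / (2 * (k^2 - 1))"
  \<comment> \<open>The modes are instantiated pointwise: as conditional rewrite rules they would loop on \<open>m\<^sub>i 0\<close>.\<close>
  have "z t - y t = ansatz k a b c d t" if "t \<in> {0..1}" for t
    unfolding diff ansatz_def a_def b_def c_def d_def mode1[rule_format, OF that]
      mode2[rule_format, OF that] mode3[rule_format, OF that] mode4[rule_format, OF that]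
    by (simp add: diff_divide_distrib add_divide_distrib)
  then show ?thesis using that[of a b c d] unfolding k_def by blast
qed

end

theorem mainTheorem6:
  fixes lam :: real and y z py pz y' z' py' pz' :: "real \<Rightarrow> real"
  assumes lam: "0 < lam" "lam < 1"
    and D: "Dk (1 / sqrt lam) \<noteq> 0"
    and dy: "\<And>t. t \<in> {0..1} \<Longrightarrow> (y has_real_derivative y' t) (at t within {0..1})"
    and dz: "\<And>t. t \<in> {0..1} \<Longrightarrow> (z has_real_derivative z' t) (at t within {0..1})"
    and dpy: "\<And>t. t \<in> {0..1} \<Longrightarrow> (py has_real_derivative py' t) (at t within {0..1})"
    and dpz: "\<And>t. t \<in> {0..1} \<Longrightarrow> (pz has_real_derivative pz' t) (at t within {0..1})"
    and ode1: "\<And>t. t \<in> {0..1} \<Longrightarrow> lam * y' t = py t + pz t - lam * y t"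
    and ode2: "\<And>t. t \<in> {0..1} \<Longrightarrow> lam * z' t = py t + pz t"
    and ode3: "\<And>t. t \<in> {0..1} \<Longrightarrow> py' t = py t - z t + 2 * y t"
    and ode4: "\<And>t. t \<in> {0..1} \<Longrightarrow> pz' t = z t - y t"
    and bc: "y 0 = 0" "z 0 = 0" "y 1 = 0" "z 1 = 1"
  shows "(\<exists>!(a, b, c, d). ansatz_bc (1 / sqrt lam) a b c d) \<and>
         (\<forall>a b c d. ansatz_bc (1 / sqrt lam) a b c d \<longrightarrow>
            (\<forall>t\<in>{0..1}. z t - y t = ansatz (1 / sqrt lam) a b c d t))"
proof -
  interpret regularized_pontryagin lam y z py pz y' z' py' pz'
    using lam(1) dy dz dpy dpz ode1 ode2 ode3 ode4 by unfold_locales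
  obtain a b c d where eq: "\<forall>t\<in>{0..1}. z t - y t = ansatz (1 / sqrt lam) a b c d t"
    using difference_eq_ansatz[OF lam(2)] .
  have bc_abcd: "ansatz_bc (1 / sqrt lam) a b c d"
    using ansatz_bc_if_eq_on_unit_interval[OF eq difference_has_real_derivative] bc by simp
  show ?thesis
  proof (intro conjI allI impI)
    show "\<exists>!(a, b, c, d). ansatz_bc (1 / sqrt lam) a b c d"
      using ex1_ansatz_bc[OF D bc_abcd] .
    fix a' b' c' d' assume "ansatz_bc (1 / sqrt lam) a' b' c' d'"
    from ansatz_bc_unique[OF D this bc_abcd] eq
    show "\<forall>t\<in>{0..1}. z t - y t = ansatz (1 / sqrt lam) a' b' c' d' t" by simp
  qed
qed

end
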